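(* Let $n\ge 3$, let $u\in\mathbb{Z}_n^\times$, and let $k$ be an integer with $k\not\equiv 0,1\pmod n$. Consider the set $\mathcal{B}=\binom{\mathbb{Z}_n}{3}-f_{u,ku}$. (1) If $n$ is odd, $\mathcal{B}$ is the set of bases of a matroid on $\mathbb{Z}_n$ if and only if $k\not\equiv -1,\,2,\,\tfrac{n+1}{2}\pmod n$. (2) If $n$ is even, $\mathcal{B}$ is the set of bases of a matroid on $\mathbb{Z}_n$ if and only if $k\not\equiv -1,\,2,\,\tfrac{n}{2},\,\tfrac{n}{2}+1\pmod n$. (Such a matroid is invariant under translation, i.e. corresponds to a three-dimensional tropical subrepresentation of $\mathbb{B}[\mathbb{Z}_n]$.)
   Context: $\mathbb{Z}_n$ acts on $\binom{\mathbb{Z}_n}{3}$ (3-element subsets of $\mathbb{Z}_n$) by $x\cdot\{a,b,c\}=\{x+a,x+b,x+c\}$. For $i,j\in\mathbb{Z}_n$ with $0,i,j$ pairwise distinct, $f_{i,j}=\{\{a,a+i,a+j\}\mid a\in\mathbb{Z}_n\}$, an orbit of this action. $\mathbb{Z}_n^\times$ denotes the units of $\mathbb{Z}_n$. *)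

theory Defs
  imports "HOL-Number_Theory.Number_Theory"
begin

text \<open>Z_n is modelled as the set {0..<n} of naturals with arithmetic mod n.\<close>

definition Zn :: "nat \<Rightarrow> nat set" where
  "Zn n = {0..<n}"

definition triples :: "nat \<Rightarrow> nat set set" where
  "triples n = {S. S \<subseteq> Zn n \<and> card S = 3}"

definition orbit_f :: "nat \<Rightarrow> nat \<Rightarrow> nat \<Rightarrow> nat set set" where
  "orbit_f n i j = {{a, (a + i) mod n, (a + j) mod n} | a. a \<in> Zn n}"

definition matroid_bases :: "'a set \<Rightarrow> 'a set set \<Rightarrow> bool" where
  "matroid_bases E B \<longleftrightarrow>
     B \<noteq> {} \<and> (\<forall>X\<in>B. X \<subseteq> E) \<and>
     (\<forall>X\<in>B. \<forall>Y\<in>B. \<forall>x\<in>X - Y. \<exists>y\<in>Y - X. insert y (X - {x}) \<in> B)"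

end

theory Submission
  imports Defs
begin

text \<open>Multiplication by the unit \<open>u\<close> permutes \<open>\<int>\<^sub>n\<close> and carries \<open>f\<^sub>1\<^sub>,\<^sub>k\<close> onto
  \<open>f\<^sub>u\<^sub>,\<^sub>k\<^sub>u\<close>, so it suffices to treat the orbit of the triangles \<open>{a, a + 1, a + j}\<close> with
  \<open>j = k mod n\<close>. Two such triangles share two points only if two of the differences
  \<open>\<plusminus>1, \<plusminus>j, \<plusminus>(j - 1)\<close> agree modulo \<open>n\<close>, which happens exactly for the excluded
  values of \<open>k\<close>. Otherwise the orbit is a family of 3-sets pairwise meeting in at most one
  point, and removing such a family from all 3-sets leaves the bases of a (sparse paving)
  matroid. For each excluded value an explicit pair of bases violates basis exchange; for
  \<open>n \<le> 4\<close> the orbit even contains every 3-set.\<close>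

lemma matroid_bases_image:
  assumes inj: "inj_on f E" and B: "matroid_bases E Bs"
  shows "matroid_bases (f ` E) ((`) f ` Bs)"
  unfolding matroid_bases_def
proof (intro conjI ballI)
  have sub: "\<And>X. X \<in> Bs \<Longrightarrow> X \<subseteq> E" and exch: "\<And>X Y x. X \<in> Bs \<Longrightarrow> Y \<in> Bs \<Longrightarrow> x \<in> X - Y
      \<Longrightarrow> \<exists>y\<in>Y - X. insert y (X - {x}) \<in> Bs"
    using B by (auto simp: matroid_bases_def)
  show "(`) f ` Bs \<noteq> {}" using B by (auto simp: matroid_bases_def)
  show "X' \<subseteq> f ` E" if "X' \<in> (`) f ` Bs" for X' using that sub by auto
  fix X' Y' x' assume "X' \<in> (`) f ` Bs" "Y' \<in> (`) f ` Bs" "x' \<in> X' - Y'"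
  then obtain X Y x where XY: "X \<in> Bs" "Y \<in> Bs" "X' = f ` X" "Y' = f ` Y" "x \<in> X - Y" "x' = f x"
    by blast
  have inj_XY: "inj_on f (X \<union> Y)" using inj sub XY by (meson Un_least inj_on_subset)
  obtain y where y: "y \<in> Y - X" "insert y (X - {x}) \<in> Bs" using exch XY by blast
  have "f y \<in> Y' - X'" using y XY inj_XY by (auto simp: inj_on_def)
  moreover have "f ` insert y (X - {x}) = insert (f y) (X' - {x'})"
    using XY inj_XY by (auto simp: inj_on_def)
  ultimately show "\<exists>y'\<in>Y' - X'. insert y' (X' - {x'}) \<in> (`) f ` Bs"
    using y by (metis imageI)
qed

lemma matroid_bases_image_iff:
  assumes "inj_on f E" and "Bs \<subseteq> Pow E"
  shows "matroid_bases (f ` E) ((`) f ` Bs) \<longleftrightarrow> matroid_bases E Bs"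
proof
  let ?g = "the_inv_into E f"
  assume "matroid_bases (f ` E) ((`) f ` Bs)"
  then have "matroid_bases (?g ` f ` E) ((`) ?g ` (`) f ` Bs)"
    by (rule matroid_bases_image[OF inj_on_the_inv_into[OF assms(1)]])
  moreover have "(`) ?g ` (`) f ` Bs = Bs"
  proof -
    have "?g ` f ` X = X" if "X \<in> Bs" for X
      using that assms by (force simp: image_image the_inv_into_f_f)
    then show ?thesis by (simp add: image_image)
  qed
  moreover have "?g ` f ` E = E" using assms(1) by (rule the_inv_into_onto)
  ultimately show "matroid_bases E Bs" by simp
qed (rule matroid_bases_image[OF assms(1)])

lemma image_card_subsets:
  assumes "inj_on f E"
  shows "(`) f ` {S. S \<subseteq> E \<and> card S = k} = {S. S \<subseteq> f ` E \<and> card S = k}"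
proof (intro equalityI subsetI)
  fix S' assume "S' \<in> (`) f ` {S. S \<subseteq> E \<and> card S = k}"
  then obtain S where "S \<subseteq> E" "card S = k" "S' = f ` S" by blast
  moreover have "inj_on f S" using assms \<open>S \<subseteq> E\<close> by (rule inj_on_subset)
  ultimately show "S' \<in> {S. S \<subseteq> f ` E \<and> card S = k}" by (simp add: card_image image_mono)
next
  fix S assume "S \<in> {S. S \<subseteq> f ` E \<and> card S = k}"
  then have S: "S \<subseteq> f ` E" "card S = k" by simp_all
  then have S_eq: "f ` (E \<inter> f -` S) = S" by blast
  have "inj_on f (E \<inter> f -` S)" using assms by (rule inj_on_subset) simp
  then have "card (E \<inter> f -` S) = k" using S S_eq card_image by fastforce
  then show "S \<in> (`) f ` {S. S \<subseteq> E \<and> card S = k}" using S_eq by blast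
qed

lemma matroid_bases_sparse_paving:
  fixes E :: "'a set" and Cs :: "'a set set" and k :: nat
  defines "Bs \<equiv> {S. S \<subseteq> E \<and> card S = k} - Cs"
  assumes "0 < k" and "Bs \<noteq> {}"
    and sparse: "\<And>C D. C \<in> Cs \<Longrightarrow> D \<in> Cs \<Longrightarrow> C \<noteq> D \<Longrightarrow> card (C \<inter> D) < k - 1"
  shows "matroid_bases E Bs"
  unfolding matroid_bases_def
proof (intro conjI ballI)
  show "Bs \<noteq> {}" by (fact assms(3))
  show "\<And>X. X \<in> Bs \<Longrightarrow> X \<subseteq> E" unfolding Bs_def by blast
  fix X Y x assume X: "X \<in> Bs" and Y: "Y \<in> Bs" and x: "x \<in> X - Y"
  let ?P = "X - {x}"
  have card: "card X = k" "card Y = k" "X \<subseteq> E" "Y \<subseteq> E" using X Y unfolding Bs_def by blast+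
  have fin: "finite X" "finite Y" using card \<open>0 < k\<close> by (metis card_ge_0_finite)+
  have cardP: "card ?P = k - 1" using card fin x by simp
  have swap_in_Cs_unique: "y = y'"
    if "y \<in> Y - X" "y' \<in> Y - X" "insert y ?P \<in> Cs" "insert y' ?P \<in> Cs" for y y'
  proof (rule ccontr)
    assume "y \<noteq> y'"
    then have "insert y ?P \<noteq> insert y' ?P" using that by auto
    then have "card (insert y ?P \<inter> insert y' ?P) < k - 1" using sparse that by blast
    moreover have "?P \<subseteq> insert y ?P \<inter> insert y' ?P" by auto
    ultimately show False using cardP fin card_mono[of "insert y ?P \<inter> insert y' ?P" ?P] by simp
  qed
  have card_swap: "card (insert y ?P) = k" if "y \<in> Y - X" for y
    using that cardP fin \<open>0 < k\<close> by simp
  have swap_basis_unless_Cs: "insert y ?P \<in> Bs \<or> insert y ?P \<in> Cs" if "y \<in> Y - X" for y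
    using that card card_swap[OF that] x unfolding Bs_def by blast
  have "\<not> Y \<subseteq> X" using card fin x by (metis DiffD1 DiffD2 card_subset_eq)
  then obtain y where y: "y \<in> Y - X" by blast
  show "\<exists>y\<in>Y - X. insert y ?P \<in> Bs"
  proof (cases "\<exists>y'\<in>Y - X. y' \<noteq> y")
    case True
    then show ?thesis using swap_in_Cs_unique swap_basis_unless_Cs y by metis
  next
    case False
    then have "Y \<subseteq> insert y ?P" using x by auto
    then have "Y = insert y ?P" using fin card card_swap[OF y] by (simp add: card_subset_eq)
    then show ?thesis using Y y by auto
  qed
qed

lemma not_matroid_bases_if_exchange_fails:
  assumes "{x, p, q} \<in> Bs" "{p, y, y'} \<in> Bs" "{y, p, q} \<notin> Bs" "{y', p, q} \<notin> Bs"
    and "x \<notin> {p, q, y, y'}"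
  shows "\<not> matroid_bases E Bs"
proof
  assume "matroid_bases E Bs"
  then obtain z where "z \<in> {p, y, y'} - {x, p, q}" "insert z ({x, p, q} - {x}) \<in> Bs"
    using assms(1,2,5) unfolding matroid_bases_def by (metis Diff_iff insertCI insert_iff)
  moreover have "{x, p, q} - {x} = {p, q}" using assms(5) by auto
  ultimately show False using assms(3,4) by auto
qed

definition tri :: "nat \<Rightarrow> nat \<Rightarrow> nat \<Rightarrow> nat \<Rightarrow> nat set" where
  "tri n i j a = {a, (a + i) mod n, (a + j) mod n}"

lemma orbit_f_eq_image: "orbit_f n i j = tri n i j ` {0..<n}"
  unfolding orbit_f_def tri_def Zn_def by auto

lemma tri_in_orbit_f: "a < n \<Longrightarrow> tri n i j a \<in> orbit_f n i j"
  by (simp add: orbit_f_eq_image)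

lemma not_in_orbit_fI:
  assumes "\<forall>a\<in>S. (a + i) mod n \<in> S \<longrightarrow> (a + j) mod n \<notin> S"
  shows "S \<notin> orbit_f n i j"
  using assms by (auto simp: orbit_f_eq_image tri_def)

lemma triples_eq_filter_Pow: "triples n = Set.filter (\<lambda>S. card S = 3) (Pow {0..<n})"
  by (auto simp: triples_def Zn_def)

lemma bij_betw_mult_mod:
  fixes n u :: nat
  assumes "0 < n" "coprime u n"
  shows "bij_betw (\<lambda>a. a * u mod n) {0..<n} {0..<n}"
proof -
  have "inj_on (\<lambda>a. a * u mod n) {0..<n}"
  proof (rule inj_onI)
    fix a b assume "a \<in> {0..<n}" "b \<in> {0..<n}" "a * u mod n = b * u mod n"
    then have "[a * u = b * u] (mod n)" by (simp add: cong_def)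
    then have "[a = b] (mod n)" using assms(2) cong_mult_rcancel_nat by blast
    then show "a = b" using \<open>a \<in> {0..<n}\<close> \<open>b \<in> {0..<n}\<close> by (simp add: cong_def)
  qed
  moreover have "(\<lambda>a. a * u mod n) ` {0..<n} \<subseteq> {0..<n}" using assms(1) by auto
  ultimately show ?thesis by (simp add: bij_betw_def endo_inj_surj)
qed

lemma tri_mult_mod: "tri n u (j * u mod n) (a * u mod n) = (\<lambda>b. b * u mod n) ` tri n 1 j a"
  by (simp add: tri_def mod_add_left_eq mod_add_right_eq mod_mult_left_eq distrib_right add_ac)

lemma matroid_bases_orbit_f_mult_iff:
  assumes "0 < n" "coprime u n"
  shows "matroid_bases (Zn n) (triples n - orbit_f n u (j * u mod n))
    \<longleftrightarrow> matroid_bases (Zn n) (triples n - orbit_f n 1 j)"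
proof -
  define f where "f a = a * u mod n" for a
  have inj: "inj_on f (Zn n)" and surj: "f ` Zn n = Zn n"
    using bij_betw_mult_mod[OF assms] unfolding bij_betw_def f_def Zn_def by auto
  have triples: "(`) f ` triples n = triples n"
    using image_card_subsets[OF inj] surj unfolding triples_def by simp
  have orbit: "(`) f ` orbit_f n 1 j = orbit_f n u (j * u mod n)"
  proof -
    have "(`) f ` orbit_f n 1 j = (\<lambda>a. tri n u (j * u mod n) (f a)) ` Zn n"
      unfolding orbit_f_eq_image image_image f_def tri_mult_mod Zn_def ..
    also have "\<dots> = tri n u (j * u mod n) ` Zn n" using surj by (metis image_image)
    finally show ?thesis by (simp add: orbit_f_eq_image Zn_def)
  qed
  have sub: "triples n \<subseteq> Pow (Zn n)" "orbit_f n 1 j \<subseteq> Pow (Zn n)"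
    by (auto simp: triples_def orbit_f_eq_image tri_def Zn_def)
  have "(`) f ` (triples n - orbit_f n 1 j) = (`) f ` triples n - (`) f ` orbit_f n 1 j"
    by (rule inj_on_image_set_diff[OF inj_on_image_Pow[OF inj]]) (use sub in auto)
  then have "matroid_bases (Zn n) (triples n - orbit_f n u (j * u mod n))
      \<longleftrightarrow> matroid_bases (f ` Zn n) ((`) f ` (triples n - orbit_f n 1 j))"
    unfolding triples orbit surj by simp
  also have "\<dots> \<longleftrightarrow> matroid_bases (Zn n) (triples n - orbit_f n 1 j)"
    by (rule matroid_bases_image_iff[OF inj]) (use sub in auto)
  finally show ?thesis .
qed

text \<open>The offsets \<open>2 \<le> j < n\<close> for which two of the differences \<open>\<plusminus>1, \<plusminus>j, \<plusminus>(j - 1)\<close>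
  between points of a triangle \<open>{a, a + 1, a + j}\<close> coincide modulo \<open>n\<close>.\<close>
definition degenerate_offset :: "nat \<Rightarrow> nat \<Rightarrow> bool" where
  "degenerate_offset n j \<longleftrightarrow> j = 2 \<or> j + 1 = n \<or> 2 * j = n \<or> 2 * j = n + 1 \<or> 2 * j = n + 2"

lemma mod_eq_if_less_double: "(x::nat) < 2 * n \<Longrightarrow> x mod n = (if x < n then x else x - n)"
  by (simp add: le_mod_geq)

lemma tri_differences_distinct:
  fixes s t s' t' :: nat
  assumes "2 \<le> j" "j < n" "\<not> degenerate_offset n j"
    and "s \<in> {0, 1, j}" "t \<in> {0, 1, j}" "s' \<in> {0, 1, j}" "t' \<in> {0, 1, j}" "s \<noteq> t" "s' \<noteq> t'"
    and "(s + t') mod n = (s' + t) mod n"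
  shows "s = s'"
proof -
  have bounds: "s + t' < 2 * n" "s' + t < 2 * n" using assms(1,2,4-7) by auto
  have "s + t' = s' + t \<or> s + t' = s' + t + n \<or> s' + t = s + t' + n"
    using assms(10) unfolding mod_eq_if_less_double[OF bounds(1)] mod_eq_if_less_double[OF bounds(2)]
    by (auto split: if_splits)
  then show ?thesis
    using assms(1,2,3,4-9) unfolding degenerate_offset_def insert_iff empty_iff
    by (elim disjE; presburger)
qed

lemma tri_eq_if_two_common_points:
  assumes "2 \<le> j" "j < n" "\<not> degenerate_offset n j" "a < n" "b < n"
    and "p \<noteq> q" "p \<in> tri n 1 j a" "q \<in> tri n 1 j a" "p \<in> tri n 1 j b" "q \<in> tri n 1 j b"
  shows "a = b"
proof -
  have offset: "\<exists>s\<in>{0, 1, j}. r = (c + s) mod n" if "c < n" "r \<in> tri n 1 j c" for r c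
    using that by (auto simp: tri_def)
  obtain s t s' t' where st: "s \<in> {0, 1, j}" "t \<in> {0, 1, j}" "s' \<in> {0, 1, j}" "t' \<in> {0, 1, j}"
    and pq: "p = (a + s) mod n" "q = (a + t) mod n" "p = (b + s') mod n" "q = (b + t') mod n"
    using offset[OF assms(4,7)] offset[OF assms(4,8)] offset[OF assms(5,9)] offset[OF assms(5,10)]
    by metis
  have "s \<noteq> t" "s' \<noteq> t'" using pq \<open>p \<noteq> q\<close> by auto
  have "[(s + t') + (a + b) = (s' + t) + (a + b)] (mod n)"
    using pq unfolding cong_def by (metis add.assoc add.commute mod_add_left_eq mod_add_right_eq)
  then have "(s + t') mod n = (s' + t) mod n" unfolding cong_add_rcancel_nat by (simp only: cong_def)
  then have "s = s'" by (rule tri_differences_distinct[OF assms(1-3) st \<open>s \<noteq> t\<close> \<open>s' \<noteq> t'\<close>])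
  then have "[a + s = b + s] (mod n)" using pq unfolding cong_def by simp
  then have "[a = b] (mod n)" by (rule cong_add_rcancel_nat[THEN iffD1])
  then show "a = b" using assms(4,5) by (simp add: cong_def)
qed

lemma card_inter_orbit_f_1_less_2:
  assumes "2 \<le> j" "j < n" "\<not> degenerate_offset n j"
    and "C \<in> orbit_f n 1 j" "D \<in> orbit_f n 1 j" "C \<noteq> D"
  shows "card (C \<inter> D) < 2"
proof (rule ccontr)
  obtain a b where ab: "a < n" "b < n" "C = tri n 1 j a" "D = tri n 1 j b"
    using assms(4,5) by (auto simp: orbit_f_eq_image)
  assume "\<not> card (C \<inter> D) < 2"
  moreover have "finite (C \<inter> D)" by (simp add: ab tri_def)
  ultimately obtain p q where "p \<in> C \<inter> D" "q \<in> C \<inter> D" "p \<noteq> q"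
    using card_le_Suc0_iff_eq[of "C \<inter> D"] by (auto simp: less_Suc_eq_le)
  then have "a = b" using tri_eq_if_two_common_points assms(1-3) ab by blast
  then show False using ab \<open>C \<noteq> D\<close> by simp
qed

lemma matroid_bases_orbit_f_1:
  assumes "2 \<le> j" "j < n" "\<not> degenerate_offset n j"
  shows "matroid_bases (Zn n) (triples n - orbit_f n 1 j)"
  unfolding triples_def
proof (rule matroid_bases_sparse_paving)
  have "4 \<le> n" using assms unfolding degenerate_offset_def by linarith
  then have "{0, 1, 2} \<in> triples n" "{0, 1, 3} \<in> triples n" by (auto simp: triples_def Zn_def)
  moreover have "card ({0, 1, 2} \<inter> {0, 1, 3 :: nat}) = 2" by (simp add: insert_commute)
  then have "\<not> ({0, 1, 2} \<in> orbit_f n 1 j \<and> {0, 1, 3} \<in> orbit_f n 1 j)"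
    using card_inter_orbit_f_1_less_2[OF assms, of "{0, 1, 2}" "{0, 1, 3}"] by force
  ultimately show "{S. S \<subseteq> Zn n \<and> card S = 3} - orbit_f n 1 j \<noteq> {}"
    unfolding triples_def by blast
qed (simp_all add: card_inter_orbit_f_1_less_2[OF assms])

text \<open>In each degenerate case below, the pair \<open>{p, q}\<close> lies in the two orbit triangles
  \<open>{y, p, q}\<close> and \<open>{y', p, q}\<close>, so \<open>x\<close> cannot be exchanged out of \<open>{x, p, q}\<close>
  towards \<open>{p, y, y'}\<close>.\<close>

lemma not_matroid_bases_offset_2:
  assumes "5 \<le> n"
  shows "\<not> matroid_bases (Zn n) (triples n - orbit_f n 1 2)"
proof (rule not_matroid_bases_if_exchange_fails[of 4 1 2 _ 0 3])
  have "tri n 1 2 0 = {0, 1, 2}" "tri n 1 2 1 = {3, 1, 2}" using assms by (auto simp: tri_def)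
  then show "{0, 1, 2} \<notin> triples n - orbit_f n 1 2" "{3, 1, 2} \<notin> triples n - orbit_f n 1 2"
    using tri_in_orbit_f[of 0 n 1 2] tri_in_orbit_f[of 1 n 1 2] assms by auto
  show "{4, 1, 2} \<in> triples n - orbit_f n 1 2" "{1, 0, 3} \<in> triples n - orbit_f n 1 2"
    using assms by (intro DiffI not_in_orbit_fI; auto simp: triples_def Zn_def mod_eq_if_less_double)+
qed simp

lemma not_matroid_bases_offset_pred:
  assumes "5 \<le> n"
  shows "\<not> matroid_bases (Zn n) (triples n - orbit_f n 1 (n - 1))"
proof (rule not_matroid_bases_if_exchange_fails[of 4 1 2 _ 0 3])
  have "tri n 1 (n - 1) 1 = {0, 1, 2}" "tri n 1 (n - 1) 2 = {3, 1, 2}"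
    using assms by (auto simp: tri_def mod_eq_if_less_double)
  then show "{0, 1, 2} \<notin> triples n - orbit_f n 1 (n - 1)" "{3, 1, 2} \<notin> triples n - orbit_f n 1 (n - 1)"
    using tri_in_orbit_f[of 1 n 1 "n - 1"] tri_in_orbit_f[of 2 n 1 "n - 1"] assms by auto
  show "{4, 1, 2} \<in> triples n - orbit_f n 1 (n - 1)" "{1, 0, 3} \<in> triples n - orbit_f n 1 (n - 1)"
    using assms by (intro DiffI not_in_orbit_fI; auto simp: triples_def Zn_def mod_eq_if_less_double)+
qed simp

lemma not_matroid_bases_offset_half:
  assumes "n = 2 * m" "3 \<le> m"
  shows "\<not> matroid_bases (Zn n) (triples n - orbit_f n 1 m)"
proof (rule not_matroid_bases_if_exchange_fails[of 2 0 m _ 1 "m + 1"])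
  have "tri n 1 m 0 = {1, 0, m}" "tri n 1 m m = {m + 1, 0, m}"
    using assms by (auto simp: tri_def mod_eq_if_less_double)
  then show "{1, 0, m} \<notin> triples n - orbit_f n 1 m" "{m + 1, 0, m} \<notin> triples n - orbit_f n 1 m"
    using tri_in_orbit_f[of 0 n 1 m] tri_in_orbit_f[of m n 1 m] assms by auto
  show "{2, 0, m} \<in> triples n - orbit_f n 1 m" "{0, 1, m + 1} \<in> triples n - orbit_f n 1 m"
    using assms by (intro DiffI not_in_orbit_fI; auto simp: triples_def Zn_def mod_eq_if_less_double)+
qed (use assms in simp)

lemma not_matroid_bases_offset_half_succ:
  assumes "n = 2 * m" "3 \<le> m"
  shows "\<not> matroid_bases (Zn n) (triples n - orbit_f n 1 (m + 1))"
proof (rule not_matroid_bases_if_exchange_fails[of 2 1 "m + 1" _ 0 m])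
  have "tri n 1 (m + 1) 0 = {0, 1, m + 1}" "tri n 1 (m + 1) m = {m, 1, m + 1}"
    using assms by (auto simp: tri_def mod_eq_if_less_double)
  then show "{0, 1, m + 1} \<notin> triples n - orbit_f n 1 (m + 1)"
    "{m, 1, m + 1} \<notin> triples n - orbit_f n 1 (m + 1)"
    using tri_in_orbit_f[of 0 n 1 "m + 1"] tri_in_orbit_f[of m n 1 "m + 1"] assms by auto
  show "{2, 1, m + 1} \<in> triples n - orbit_f n 1 (m + 1)" "{1, 0, m} \<in> triples n - orbit_f n 1 (m + 1)"
    using assms by (intro DiffI not_in_orbit_fI; auto simp: triples_def Zn_def mod_eq_if_less_double)+
qed (use assms in simp)

lemma not_matroid_bases_offset_half_odd:
  assumes "n + 1 = 2 * h" "3 \<le> h"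
  shows "\<not> matroid_bases (Zn n) (triples n - orbit_f n 1 h)"
proof (rule not_matroid_bases_if_exchange_fails[of 2 h 1 _ 0 "h + 1"])
  have "tri n 1 h 0 = {0, h, 1}" "tri n 1 h h = {h + 1, h, 1}"
    using assms by (auto simp: tri_def mod_eq_if_less_double)
  then show "{0, h, 1} \<notin> triples n - orbit_f n 1 h" "{h + 1, h, 1} \<notin> triples n - orbit_f n 1 h"
    using tri_in_orbit_f[of 0 n 1 h] tri_in_orbit_f[of h n 1 h] assms by auto
  show "{2, h, 1} \<in> triples n - orbit_f n 1 h" "{h, 0, h + 1} \<in> triples n - orbit_f n 1 h"
    using assms by (intro DiffI not_in_orbit_fI; auto simp: triples_def Zn_def mod_eq_if_less_double)+
qed (use assms in simp)

lemma triples_subset_orbit_f_small: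
  assumes "n \<le> 4" "2 \<le> j" "j < n"
  shows "triples n \<subseteq> orbit_f n 1 j"
proof -
  have small: "triples 3 \<subseteq> orbit_f 3 1 2" "triples 4 \<subseteq> orbit_f 4 1 2" "triples 4 \<subseteq> orbit_f 4 1 3"
    unfolding triples_eq_filter_Pow orbit_f_eq_image tri_def by code_simp+
  consider "n = 3" "j = 2" | "n = 4" "j = 2" | "n = 4" "j = 3" using assms by linarith
  then show ?thesis using small by cases simp_all
qed

lemma matroid_bases_orbit_f_1_iff:
  assumes "2 \<le> j" "j < n"
  shows "matroid_bases (Zn n) (triples n - orbit_f n 1 j) \<longleftrightarrow> \<not> degenerate_offset n j"
proof (cases "degenerate_offset n j")
  case False
  then show ?thesis using matroid_bases_orbit_f_1[OF assms] by simp
next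
  case True
  have "\<not> matroid_bases (Zn n) (triples n - orbit_f n 1 j)"
  proof (cases "n \<le> 4")
    case True
    then show ?thesis
      using triples_subset_orbit_f_small[OF True assms] by (auto simp: matroid_bases_def)
  next
    case False
    from \<open>degenerate_offset n j\<close>
    consider "j = 2" | "j = n - 1" | "2 * j = n" | "2 * j = n + 1" | "2 * j = n + 2"
      unfolding degenerate_offset_def by linarith
    then show ?thesis
    proof cases
      case 5
      then have "n = 2 * (j - 1)" "j = (j - 1) + 1" "3 \<le> j - 1" using False by linarith+
      then show ?thesis using not_matroid_bases_offset_half_succ by metis
    qed (use False not_matroid_bases_offset_2 not_matroid_bases_offset_pred
          not_matroid_bases_offset_half not_matroid_bases_offset_half_odd in \<open>auto\<close>)
  qed
  then show ?thesis using True by simp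
qed

lemma degenerate_offset_mod_iff:
  fixes k :: int
  assumes "3 \<le> n"
  shows "degenerate_offset n (nat (k mod int n)) \<longleftrightarrow>
    [k = -1] (mod int n) \<or> [k = 2] (mod int n) \<or>
    (odd n \<and> [k = int ((n + 1) div 2)] (mod int n)) \<or>
    (even n \<and> ([k = int (n div 2)] (mod int n) \<or> [k = int (n div 2) + 1] (mod int n)))"
proof -
  define j where "j = nat (k mod int n)"
  have j: "int j = k mod int n" using assms by (simp add: j_def)
  have cong_iff: "[k = int c] (mod int n) \<longleftrightarrow> j = c" if "c < n" for c
    using that j[symmetric] by (simp add: cong_def)
  have "[k = -1] (mod int n) \<longleftrightarrow> [k = int (n - 1)] (mod int n)"
    using assms by (simp add: cong_def of_nat_diff mod_diff_left_eq[symmetric])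
  then have congs: "[k = -1] (mod int n) \<longleftrightarrow> j = n - 1"
    "[k = 2] (mod int n) \<longleftrightarrow> j = 2"
    "[k = int ((n + 1) div 2)] (mod int n) \<longleftrightarrow> j = (n + 1) div 2"
    "[k = int (n div 2)] (mod int n) \<longleftrightarrow> j = n div 2"
    "[k = int (n div 2) + 1] (mod int n) \<longleftrightarrow> j = n div 2 + 1"
    using cong_iff[of "n - 1"] cong_iff[of 2] cong_iff[of "(n + 1) div 2"] cong_iff[of "n div 2"]
      cong_iff[of "n div 2 + 1"] assms by (simp_all add: add.commute)
  show ?thesis
  proof (cases "even n")
    case True
    then obtain m where "n = 2 * m" by blast
    then show ?thesis unfolding congs degenerate_offset_def j_def[symmetric] by auto
  next
    case False
    then obtain m where "n = 2 * m + 1" using oddE by blast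
    then show ?thesis unfolding congs degenerate_offset_def j_def[symmetric] by auto
  qed
qed

theorem mainTheorem15:
  fixes n u :: nat and k :: int
  assumes "n \<ge> 3"
    and "u < n" and "coprime u n"
    and "\<not> [k = 0] (mod int n)" and "\<not> [k = 1] (mod int n)"
  defines "B \<equiv> triples n - orbit_f n u (nat ((k * int u) mod int n))"
  shows "(odd n \<longrightarrow>
            (matroid_bases (Zn n) B \<longleftrightarrow>
              \<not> [k = -1] (mod int n) \<and> \<not> [k = 2] (mod int n) \<and>
              \<not> [k = int ((n + 1) div 2)] (mod int n)))
       \<and> (even n \<longrightarrow>
            (matroid_bases (Zn n) B \<longleftrightarrow>
              \<not> [k = -1] (mod int n) \<and> \<not> [k = 2] (mod int n) \<and>
              \<not> [k = int (n div 2)] (mod int n) \<and>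
              \<not> [k = int (n div 2) + 1] (mod int n)))"
proof -
  define j where "j = nat (k mod int n)"
  have j: "int j = k mod int n" "j < n" using assms(1) by (simp_all add: j_def nat_less_iff)
  have "j \<noteq> 0" "j \<noteq> 1" using assms(1,4,5) j(1) by (auto simp: cong_def)
  then have "2 \<le> j" by simp
  have "nat ((k * int u) mod int n) = j * u mod n"
    using j(1) by (simp add: nat_mod_as_int mod_mult_left_eq)
  then have "matroid_bases (Zn n) B \<longleftrightarrow> \<not> degenerate_offset n j"
    unfolding B_def using assms(1,3) matroid_bases_orbit_f_mult_iff matroid_bases_orbit_f_1_iff \<open>2 \<le> j\<close> j(2)
    by simp
  then show ?thesis
    using degenerate_offset_mod_iff[OF assms(1), of k] unfolding j_def by auto
qed

end
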